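(* Assume that for every nonempty $T\subseteq\mathbb{S}$ and every $i\in T$, the equilibrium demand satisfies $\bar q_i(T)<1/2$. If some set maximizing $\overline{re}$ over nonempty subsets of $\mathbb{S}$ has cardinality $k^*\ge2$, then $\{1,2,\dots,k^*\}$ also maximizes $\overline{re}$ over nonempty subsets of $\mathbb{S}$.
   Context: Market model: sellers $\mathbb{S}=\{1,\dots,n\}$, product qualities $\theta_1\ge\dots\ge\theta_n\ge0$. For displayed set $S$ and prices $p_i\ge0$: $a_i=e^{\theta_i-p_i}$, MNL demand $q_i=a_i/(1+\sum_{j\in S}a_j)$; sellers in $S$ play the Bertrand game (seller $i$ chooses $p_i\ge0$ to maximize $p_iq_i$). $V:(0,\infty)\to(0,1)$: $V(x)=$ the unique $v\in(0,1)$ with $v\exp(v/(1-v))=x$. For nonempty $T$, $\bar q_0(T)\in(0,1)$ is the unique solution of $\sum_{i\in T}V(\bar q_0e^{\theta_i-1})=1-\bar q_0$, $\bar q_i(T)=V(\bar q_0(T)e^{\theta_i-1})$ are the equilibrium demands, and the equilibrium revenue is $\overline{re}(T)=\sum_{i\in T}\frac{\bar q_i(T)}{1-\bar q_i(T)}$. *)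

theory Defs
  imports "HOL-Analysis.Analysis"
begin

definition V :: "real \<Rightarrow> real" where
  "V x = (THE v. 0 < v \<and> v < 1 \<and> v * exp (v / (1 - v)) = x)"

definition qbar0 :: "(nat \<Rightarrow> real) \<Rightarrow> nat set \<Rightarrow> real" where
  "qbar0 \<theta> T = (THE q0. 0 < q0 \<and> q0 < 1 \<and>
      (\<Sum>i\<in>T. V (q0 * exp (\<theta> i - 1))) = 1 - q0)"

definition qbar :: "(nat \<Rightarrow> real) \<Rightarrow> nat set \<Rightarrow> nat \<Rightarrow> real" where
  "qbar \<theta> T i = V (qbar0 \<theta> T * exp (\<theta> i - 1))"

definition re_bar :: "(nat \<Rightarrow> real) \<Rightarrow> nat set \<Rightarrow> real" where
  "re_bar \<theta> T = (\<Sum>i\<in>T. qbar \<theta> T i / (1 - qbar \<theta> T i))"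

end

theory Submission
  imports Defs
begin

text \<open>Fix an optimal set with a seller $j$ outside $\{1,\dots,k\}$, let $A$ be the other sellers,
  and parametrise the equilibria of $A$ together with one entrant by the outside share $q$: the
  entrant takes the share $1 - s(q)$ left by the outside option and $A$, and the revenue of $A$
  plus the entrant becomes a function $R(q)$ of $q$ alone.  A better entrant $i$ leads to a lower
  equilibrium outside share, $q_i \le q_j < q_A$.  As long as all demands in $A$ stay below $1/2$,
  the sign of $R'$ changes at most once, from negative to positive.  Optimality gives
  $R(q_A) \le R(q_j)$, so $R$ cannot increase anywhere on $(q_i, q_j)$, hence
  $R(q_j) \le R(q_i)$: exchanging $j$ for a missing $i \le k$ keeps the set optimal.  Finitely
  many exchanges reach $\{1,\dots,k\}$; $k \ge 2$ keeps $A$ nonempty.\<close>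

definition W :: "real \<Rightarrow> real" where
  "W v = v * exp (v / (1 - v))"

lemma W_strict_mono: assumes "0 < a" "a < b" "b < 1" shows "W a < W b"
proof -
  have "a / (1 - a) < b / (1 - b)" using assms by (simp add: field_simps)
  thus ?thesis unfolding W_def using assms by (intro mult_strict_mono) auto
qed

lemma W_ge: assumes "0 \<le> v" "v < 1" shows "v \<le> W v"
  unfolding W_def using assms by (simp add: mult_le_cancel_left1)

lemma W_has_real_derivative:
  assumes "v < 1"
  shows "(W has_real_derivative exp (v / (1 - v)) * (1 + v / (1 - v)^2)) (at v)"
  unfolding W_def using assms
  by (auto intro!: derivative_eq_intros simp: field_simps power2_eq_square)

lemma W_surj: assumes "0 < x" shows "\<exists>v. 0 < v \<and> v < 1 \<and> W v = x"
proof -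
  define a where "a = min (1/2) (x / 6)"
  define b where "b = (2*x + 1) / (2*x + 2)"
  have a: "0 < a" "a \<le> 1/2" using assms by (auto simp: a_def)
  have b: "1/2 \<le> b" "b < 1" using assms by (auto simp: b_def field_simps)
  have "W a \<le> a * exp 1" unfolding W_def using a by (intro mult_left_mono) (auto simp: field_simps)
  also have "\<dots> \<le> a * 3" using a exp_le by (intro mult_left_mono) auto
  finally have Wa: "W a < x" using a assms by (auto simp: a_def)
  have "b * (1 + b/(1-b)) \<le> W b"
    unfolding W_def using b by (intro mult_left_mono exp_ge_add_one_self) auto
  moreover have "b * (1 + b/(1-b)) = b/(1-b)" using b by (simp add: field_simps)
  moreover have "b/(1-b) = 2*x + 1" using assms by (simp add: b_def field_simps)
  ultimately have Wb: "x < W b" using assms by linarith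
  have "continuous_on {a..b} W"
    unfolding W_def using a b by (intro continuous_intros) auto
  then obtain v where "a \<le> v" "v \<le> b" "W v = x"
    using IVT'[of W a x b] Wa Wb a b by auto
  thus ?thesis using a b by (intro exI[of _ v]) auto
qed

lemma W_inj: assumes "0 < u" "u < 1" "0 < v" "v < 1" "W u = W v" shows "u = v"
  using W_strict_mono[of u v] W_strict_mono[of v u] assms by (cases u v rule: linorder_cases) auto

lemma
  assumes "0 < x"
  shows V_pos: "0 < V x" and V_less_1: "V x < 1" and W_V: "W (V x) = x"
proof -
  have "\<exists>!v. 0 < v \<and> v < 1 \<and> v * exp (v / (1 - v)) = x"
    using W_surj[OF assms] W_inj unfolding W_def by metis
  from theI'[OF this] show "0 < V x" "V x < 1" "W (V x) = x" by (auto simp: V_def W_def)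
qed

lemma V_W: assumes "0 < v" "v < 1" shows "V (W v) = v"
proof -
  have "0 < W v" unfolding W_def using assms by simp
  thus ?thesis using W_inj[of "V (W v)" v] V_pos V_less_1 W_V assms by blast
qed

lemma V_strict_mono: assumes "0 < x" "x < y" shows "V x < V y"
proof (rule ccontr)
  assume "\<not> V x < V y"
  hence "W (V y) \<le> W (V x)"
    using W_strict_mono[of "V y" "V x"] V_pos V_less_1 assms by (cases "V x = V y") auto
  thus False using W_V assms by simp
qed

lemma V_mono: assumes "0 < x" "x \<le> y" shows "V x \<le> V y"
  using V_strict_mono[of x y] assms by (cases "x = y") auto

lemma V_le: assumes "0 < x" shows "V x \<le> x"
  using W_ge[of "V x"] V_pos[OF assms] V_less_1[OF assms] W_V[OF assms] by simp

lemma V_has_real_derivative: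
  assumes "0 < x"
  shows "(V has_real_derivative inverse (exp (V x / (1 - V x)) * (1 + V x / (1 - V x)^2))) (at x)"
proof -
  let ?v = "V x"
  have v: "0 < ?v" "?v < 1" "W ?v = x" using V_pos V_less_1 W_V assms by auto
  have "isCont V (W ?v)"
  proof (rule isCont_inverse_function2[where f = W and a = "?v / 2" and b = "(1 + ?v) / 2"])
    fix z assume "?v / 2 \<le> z" "z \<le> (1 + ?v) / 2"
    thus "V (W z) = z" "isCont W z"
      using V_W W_has_real_derivative[THEN DERIV_isCont, of z] v by auto
  qed (use v in auto)
  hence "isCont V x" using v by simp
  moreover have "0 < exp (?v / (1 - ?v)) * (1 + ?v / (1 - ?v)^2)"
    using v by (intro mult_pos_pos add_pos_nonneg) auto
  ultimately show ?thesis
    using W_V W_has_real_derivative[OF v(2)] v assms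
    by (intro DERIV_inverse_function[where f = W and a = 0 and b = "x + 1"]) auto
qed

text \<open>The elasticity of the demand $V(qc)$ with respect to the outside share $q$,
  expressed through the demand itself: $q \cdot \frac{d}{dq} V(qc) = \mathit{elast}(V(qc))$.\<close>
definition elast :: "real \<Rightarrow> real" where
  "elast v = v * (1 - v)^2 / (1 - v + v^2)"

lemma one_sub_add_square_pos: "0 < 1 - v + (v::real)^2"
proof -
  have "1 - v + v^2 = (v - 1/2)^2 + 3/4" by (simp add: power2_eq_square algebra_simps)
  thus ?thesis by (metis add_nonneg_pos zero_le_power2 zero_less_divide_iff zero_less_numeral)
qed

lemma elast_eq: assumes "v < 1" shows "elast v = v / (1 + v / (1 - v)^2)"
proof -
  have "0 < (1 - v)^2" using assms by simp
  thus ?thesis unfolding elast_def using one_sub_add_square_pos[of v]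
    by (simp add: field_simps power2_eq_square)
qed

lemma V_scaled_has_real_derivative:
  assumes "0 < q" "0 < c"
  shows "((\<lambda>q. V (q * c)) has_real_derivative elast (V (q * c)) / q) (at q)"
proof -
  let ?v = "V (q * c)"
  have qc: "0 < q * c" using assms by simp
  have v: "0 < ?v" "?v < 1" "?v * exp (?v / (1 - ?v)) = q * c"
    using V_pos[OF qc] V_less_1[OF qc] W_V[OF qc] by (auto simp: W_def)
  define D where "D = 1 + ?v / (1 - ?v)^2"
  have D: "0 < D" unfolding D_def using v by (simp add: add_pos_nonneg)
  have "exp (?v / (1 - ?v)) = q * c / ?v" using v by (simp add: field_simps)
  hence "inverse (exp (?v / (1 - ?v)) * D) * c = ?v / (q * D)"
    using v(1) assms D by (simp add: field_simps)
  also have "\<dots> = elast ?v / q"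
    unfolding elast_eq[OF v(2)] D_def by simp
  finally have rate: "inverse (exp (?v / (1 - ?v)) * D) * c = elast ?v / q" .
  have "((\<lambda>q. q * c) has_real_derivative c) (at q)"
    by (auto intro!: derivative_eq_intros)
  from DERIV_chain2[OF V_has_real_derivative[OF qc, folded D_def] this]
  show ?thesis unfolding rate .
qed

definition elast_gap :: "real \<Rightarrow> real" where
  "elast_gap v = v^2 / (1 - v + v^2)"

definition elast_gap_deriv :: "real \<Rightarrow> real" where
  "elast_gap_deriv v = (2 * v - v^2) / (1 - v + v^2)^2"

definition odds :: "real \<Rightarrow> real" where
  "odds v = v / (1 - v)"

definition odds_elast :: "real \<Rightarrow> real" where
  "odds_elast v = v / (1 - v + v^2)"

lemma elast_eq_diff_gap: "elast v = v - elast_gap v"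
proof -
  have "v * (1 - v + v^2) - v^2 = v * (1 - v)^2" by (simp add: algebra_simps power2_eq_square)
  thus ?thesis unfolding elast_def elast_gap_def using one_sub_add_square_pos[of v]
    by (simp add: field_simps)
qed

lemma elast_gap_nonneg: "0 \<le> elast_gap v"
  unfolding elast_gap_def using one_sub_add_square_pos[of v] by simp

lemma elast_gap_has_real_derivative: "(elast_gap has_real_derivative elast_gap_deriv v) (at v)"
  unfolding elast_gap_def elast_gap_deriv_def using one_sub_add_square_pos[of v]
  by (auto intro!: derivative_eq_intros simp: field_simps power2_eq_square)

lemma odds_has_real_derivative:
  assumes "v < 1" shows "(odds has_real_derivative 1 / (1 - v)^2) (at v)"
  unfolding odds_def using assms
  by (auto intro!: derivative_eq_intros simp: field_simps power2_eq_square)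

lemma odds_elast_eq: assumes "v < 1" shows "1 / (1 - v)^2 * elast v = odds_elast v"
  unfolding elast_def odds_elast_def using assms by simp

lemma odds_elast_nonneg: "0 \<le> v \<Longrightarrow> 0 \<le> odds_elast v"
  unfolding odds_elast_def using one_sub_add_square_pos[of v] by simp

lemma odds_elast_mono: assumes "0 \<le> v" "v \<le> u" "u \<le> 1" shows "odds_elast v \<le> odds_elast u"
proof -
  have "u * (1 - v + v^2) - v * (1 - u + u^2) = (u - v) * (1 - u * v)"
    by (simp add: algebra_simps power2_eq_square)
  moreover have "0 \<le> (u - v) * (1 - u * v)"
    using assms by (intro mult_nonneg_nonneg) (auto simp: mult_le_one)
  ultimately show ?thesis unfolding odds_elast_def using one_sub_add_square_pos[of u] one_sub_add_square_pos[of v]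
    by (simp add: divide_simps mult.commute)
qed

text \<open>The pointwise estimate behind the monotonicity of $\sum \mathit{elast\_gap} / s$
  along the equilibrium path; this is where $v \le 1/2$ and $s \le 1$ enter.\<close>
lemma elast_gap_ineq:
  fixes v s :: real
  assumes "0 < v" "v \<le> 1/2" "0 < s" "s \<le> 1"
  shows "elast_gap v * (s - elast_gap v) \<le> s * (elast_gap_deriv v * elast v)"
proof -
  define D where "D = 1 - v + v^2"
  have D: "0 < D" unfolding D_def by (rule one_sub_add_square_pos)
  define c where "c = (2 - v) * (1 - v)^2 - D^2"
  have "0 \<le> s * c + v^2 * D"
  proof (cases "0 \<le> c")
    case True thus ?thesis using assms D by simp
  next
    case False
    hence "c \<le> s * c" using assms by (simp add: mult_le_cancel_right1)
    moreover have "c + v^2 * D = (1 - v) * (1 - 2 * v)"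
      unfolding c_def D_def by (simp add: algebra_simps power2_eq_square)
    moreover have "0 \<le> (1 - v) * (1 - 2 * v)" using assms by simp
    ultimately show ?thesis by linarith
  qed
  moreover have "s * (elast_gap_deriv v * elast v) - elast_gap v * (s - elast_gap v)
      = v^2 * (s * c + v^2 * D) / D^3"
    unfolding elast_gap_def elast_gap_deriv_def elast_def D_def[symmetric] c_def using D
    by (simp add: field_simps power2_eq_square power3_eq_cube)
  ultimately show ?thesis using D by (smt (verit) divide_nonneg_pos zero_le_mult_iff
        zero_le_power2 zero_less_power)
qed

text \<open>For a displayed set $A$ with weights $x_l = e^{\theta_l - 1}$ and an outside share $q$,
  $\mathit{share}$ is the total share of the outside option and of $A$; an entrant $j$ with
  equilibrium outside share $q$ takes the remaining share $1 - \mathit{share}$, so that the revenue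
  of $A \cup \{j\}$ is $\mathit{revenue\_with\_entrant}$ evaluated at $q$.  The sign of its
  derivative in $q$ is that of $\mathit{revenue\_slope}$.\<close>
definition share :: "(nat \<Rightarrow> real) \<Rightarrow> nat set \<Rightarrow> real \<Rightarrow> real" where
  "share x A q = q + (\<Sum>l\<in>A. V (q * x l))"

definition revenue_with_entrant :: "(nat \<Rightarrow> real) \<Rightarrow> nat set \<Rightarrow> real \<Rightarrow> real" where
  "revenue_with_entrant x A q = (\<Sum>l\<in>A. odds (V (q * x l))) + 1 / share x A q - 1"

definition revenue_slope :: "(nat \<Rightarrow> real) \<Rightarrow> nat set \<Rightarrow> real \<Rightarrow> real" where
  "revenue_slope x A q = (\<Sum>l\<in>A. odds_elast (V (q * x l))) * share x A q
     + (\<Sum>l\<in>A. elast_gap (V (q * x l))) / share x A q - 1"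

context
  fixes x :: "nat \<Rightarrow> real" and A :: "nat set"
  assumes finite_A: "finite A" and x_pos: "\<And>l. l \<in> A \<Longrightarrow> 0 < x l"
begin

lemma V_weight_bounds: "0 < q \<Longrightarrow> l \<in> A \<Longrightarrow> 0 < V (q * x l) \<and> V (q * x l) < 1"
  using V_pos[of "q * x l"] V_less_1[of "q * x l"] x_pos[of l] by simp

lemma V_weight_mono: "0 < q \<Longrightarrow> q \<le> r \<Longrightarrow> l \<in> A \<Longrightarrow> V (q * x l) \<le> V (r * x l)"
  using x_pos[of l] by (intro V_mono) (auto intro: mult_right_mono)

lemma share_pos: assumes "0 < q" shows "0 < share x A q"
proof -
  have "0 \<le> (\<Sum>l\<in>A. V (q * x l))"
    using V_weight_bounds[OF assms] by (intro sum_nonneg) (simp add: less_imp_le)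
  thus ?thesis unfolding share_def using assms by simp
qed

lemma share_strict_mono: "0 < q \<Longrightarrow> q < r \<Longrightarrow> share x A q < share x A r"
proof -
  assume "0 < q" "q < r"
  hence "(\<Sum>l\<in>A. V (q * x l)) \<le> (\<Sum>l\<in>A. V (r * x l))" by (intro sum_mono V_weight_mono) auto
  thus ?thesis using \<open>q < r\<close> unfolding share_def by linarith
qed

lemma share_mono: "0 < q \<Longrightarrow> q \<le> r \<Longrightarrow> share x A q \<le> share x A r"
  using share_strict_mono by (cases "q = r") (auto intro: less_imp_le)

lemma share_has_real_derivative:
  assumes "0 < q"
  shows "(share x A has_real_derivative
           (share x A q - (\<Sum>l\<in>A. elast_gap (V (q * x l)))) / q) (at q)"
proof -
  have "(share x A has_real_derivative 1 + (\<Sum>l\<in>A. elast (V (q * x l)) / q)) (at q)"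
    unfolding share_def[abs_def] using assms
    by (auto intro!: derivative_eq_intros DERIV_sum V_scaled_has_real_derivative x_pos)
  moreover have "1 + (\<Sum>l\<in>A. elast (V (q * x l)) / q)
      = (share x A q - (\<Sum>l\<in>A. elast_gap (V (q * x l)))) / q"
    unfolding share_def elast_eq_diff_gap using assms
    by (simp add: sum_divide_distrib[symmetric] sum_subtractf field_simps)
  ultimately show ?thesis by simp
qed

lemma share_continuous_on: "0 < a \<Longrightarrow> continuous_on {a..b} (share x A)"
  by (rule DERIV_atLeastAtMost_imp_continuous_on)
     (use share_has_real_derivative in \<open>meson dual_order.strict_trans1\<close>)

lemma revenue_with_entrant_has_real_derivative:
  assumes q: "0 < q"
  shows "(revenue_with_entrant x A has_real_derivative
           revenue_slope x A q / (q * share x A q)) (at q)"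
proof -
  let ?s = "share x A q" and ?G = "\<Sum>l\<in>A. elast_gap (V (q * x l))"
  have s: "0 < ?s" using share_pos[OF q] .
  have odds: "((\<lambda>q. \<Sum>l\<in>A. odds (V (q * x l))) has_real_derivative
      (\<Sum>l\<in>A. 1 / (1 - V (q * x l))^2 * (elast (V (q * x l)) / q))) (at q)"
    using q V_weight_bounds[OF q] x_pos
    by (intro DERIV_sum DERIV_chain2[OF odds_has_real_derivative V_scaled_has_real_derivative]) auto
  have "(\<Sum>l\<in>A. 1 / (1 - V (q * x l))^2 * (elast (V (q * x l)) / q))
      = (\<Sum>l\<in>A. odds_elast (V (q * x l))) / q"
    using V_weight_bounds[OF q]
    by (simp add: sum_divide_distrib odds_elast_eq[symmetric] mult.assoc[symmetric])
  note odds = odds[unfolded this]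
  have inv: "((\<lambda>q. 1 / share x A q) has_real_derivative - ((?s - ?G) / q / (?s * ?s))) (at q)"
    using DERIV_divide[OF DERIV_const[of 1] share_has_real_derivative[OF q]] s by simp
  have "(\<Sum>l\<in>A. odds_elast (V (q * x l))) / q - (?s - ?G) / q / (?s * ?s)
      = revenue_slope x A q / (q * ?s)"
    unfolding revenue_slope_def using s q by (simp add: field_simps power2_eq_square)
  thus ?thesis
    using DERIV_diff[OF DERIV_add[OF odds inv] DERIV_const[of 1]]
    unfolding revenue_with_entrant_def[abs_def] by simp
qed

lemma revenue_with_entrant_continuous_on:
  "0 < a \<Longrightarrow> continuous_on {a..b} (revenue_with_entrant x A)"
  by (rule DERIV_atLeastAtMost_imp_continuous_on)
     (use revenue_with_entrant_has_real_derivative in \<open>meson dual_order.strict_trans1\<close>)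

lemma elast_gap_sum_has_real_derivative:
  assumes "0 < q"
  shows "((\<lambda>q. \<Sum>l\<in>A. elast_gap (V (q * x l))) has_real_derivative
           (\<Sum>l\<in>A. elast_gap_deriv (V (q * x l)) * (elast (V (q * x l)) / q))) (at q)"
  using assms x_pos
  by (intro DERIV_sum DERIV_chain2[OF elast_gap_has_real_derivative V_scaled_has_real_derivative])
     auto

lemma gap_share_ratio_deriv_nonneg:
  assumes q: "0 < q" and half: "\<And>l. l \<in> A \<Longrightarrow> V (q * x l) \<le> 1/2"
    and share_le: "share x A q \<le> 1"
  shows "\<exists>y. ((\<lambda>q. (\<Sum>l\<in>A. elast_gap (V (q * x l))) / share x A q)
           has_real_derivative y) (at q) \<and> 0 \<le> y"
proof -
  let ?s = "share x A q" and ?G = "\<Sum>l\<in>A. elast_gap (V (q * x l))"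
  let ?G' = "\<Sum>l\<in>A. elast_gap_deriv (V (q * x l)) * (elast (V (q * x l)) / q)"
  have s: "0 < ?s" using share_pos[OF q] .
  have "?G * (?s - ?G) = (\<Sum>l\<in>A. elast_gap (V (q * x l)) * (?s - ?G))"
    by (simp add: sum_distrib_right)
  also have "\<dots> \<le> (\<Sum>l\<in>A. elast_gap (V (q * x l)) * (?s - elast_gap (V (q * x l))))"
    using finite_A elast_gap_nonneg
    by (intro sum_mono mult_left_mono) (auto intro: member_le_sum)
  also have "\<dots> \<le> (\<Sum>l\<in>A. ?s * (elast_gap_deriv (V (q * x l)) * elast (V (q * x l))))"
    using V_weight_bounds[OF q] half s share_le by (intro sum_mono elast_gap_ineq) auto
  also have "\<dots> = q * ?s * ?G'"
    using q by (simp add: sum_distrib_left)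
  finally have "0 \<le> (?G' * ?s - ?G * ((?s - ?G) / q)) / (?s * ?s)"
    using q s by (simp add: field_simps)
  thus ?thesis
    using DERIV_divide[OF elast_gap_sum_has_real_derivative[OF q] share_has_real_derivative[OF q]] s
    by auto
qed

lemma revenue_slope_mono:
  assumes a: "0 < a" "a \<le> b" and half: "\<And>l. l \<in> A \<Longrightarrow> V (b * x l) \<le> 1/2"
    and share_le: "share x A b \<le> 1"
  shows "revenue_slope x A a \<le> revenue_slope x A b"
proof -
  have "(\<Sum>l\<in>A. odds_elast (V (a * x l))) \<le> (\<Sum>l\<in>A. odds_elast (V (b * x l)))"
    using a V_weight_bounds V_weight_mono
    by (intro sum_mono odds_elast_mono) (auto intro: less_imp_le)
  moreover have "0 \<le> (\<Sum>l\<in>A. odds_elast (V (a * x l)))"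
    using a V_weight_bounds by (intro sum_nonneg odds_elast_nonneg) (auto intro: less_imp_le)
  ultimately have odds_part: "(\<Sum>l\<in>A. odds_elast (V (a * x l))) * share x A a
      \<le> (\<Sum>l\<in>A. odds_elast (V (b * x l))) * share x A b"
    using share_mono[OF a] share_pos[OF a(1)] by (intro mult_mono) auto
  have "(\<Sum>l\<in>A. elast_gap (V (a * x l))) / share x A a
      \<le> (\<Sum>l\<in>A. elast_gap (V (b * x l))) / share x A b"
  proof (rule DERIV_nonneg_imp_increasing_open[OF a(2)])
    fix z assume z: "a < z" "z < b"
    show "\<exists>y. ((\<lambda>q. (\<Sum>l\<in>A. elast_gap (V (q * x l))) / share x A q)
        has_real_derivative y) (at z) \<and> 0 \<le> y"
    proof (rule gap_share_ratio_deriv_nonneg)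
      show "0 < z" using z a by simp
      show "V (z * x l) \<le> 1/2" if "l \<in> A" for l
        using V_weight_mono[of z b l] half[of l] that z a by simp
      show "share x A z \<le> 1" using share_mono[of z b] z a share_le by simp
    qed
  next
    show "continuous_on {a..b} (\<lambda>q. (\<Sum>l\<in>A. elast_gap (V (q * x l))) / share x A q)"
    proof (rule DERIV_atLeastAtMost_imp_continuous_on)
      fix z assume z: "a \<le> z" "z \<le> b"
      hence z0: "0 < z" using a by simp
      hence "share x A z \<noteq> 0" using share_pos by fastforce
      from DERIV_divide[OF elast_gap_sum_has_real_derivative[OF z0]
          share_has_real_derivative[OF z0] this]
      show "\<exists>y. ((\<lambda>q. (\<Sum>l\<in>A. elast_gap (V (q * x l))) / share x A q)
          has_real_derivative y) (at z)" by blast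
    qed
  qed
  with odds_part show ?thesis unfolding revenue_slope_def by simp
qed

lemma entrant_outside_share_order:
  assumes c: "0 < cj" "cj \<le> ci"
    and qA: "0 < qA" "share x A qA = 1"
    and qi: "0 < qi" "V (qi * ci) = 1 - share x A qi"
    and qj: "0 < qj" "V (qj * cj) = 1 - share x A qj"
  shows "qi \<le> qj" "qj < qA"
proof -
  show "qi \<le> qj"
  proof (rule ccontr)
    assume "\<not> qi \<le> qj"
    hence lt: "qj < qi" by simp
    have "qj * cj < qi * cj" using lt c by simp
    also have "\<dots> \<le> qi * ci" using c qi by simp
    finally have "qj * cj < qi * ci" .
    hence "V (qj * cj) < V (qi * ci)" using qj c by (intro V_strict_mono) auto
    moreover have "share x A qj < share x A qi" using share_strict_mono lt qj by auto
    ultimately show False using qi qj by simp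
  qed
  show "qj < qA"
  proof (rule ccontr)
    assume "\<not> qj < qA"
    hence "share x A qA \<le> share x A qj" using share_mono[of qA qj] qA by simp
    moreover have "0 < V (qj * cj)" using qj c by (intro V_pos) simp
    ultimately show False using qA qj by simp
  qed
qed

lemma revenue_with_stronger_entrant_ge:
  assumes c: "0 < cj" "cj \<le> ci"
    and qA: "0 < qA" "share x A qA = 1" "\<And>l. l \<in> A \<Longrightarrow> V (qA * x l) \<le> 1/2"
    and qi: "0 < qi" "V (qi * ci) = 1 - share x A qi"
    and qj: "0 < qj" "V (qj * cj) = 1 - share x A qj"
    and entry_pays: "revenue_with_entrant x A qA \<le> revenue_with_entrant x A qj"
  shows "revenue_with_entrant x A qj \<le> revenue_with_entrant x A qi"
proof -
  note order = entrant_outside_share_order[OF c qA(1,2) qi qj]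
  have slope_mono: "revenue_slope x A z \<le> revenue_slope x A t" if "0 < z" "z \<le> t" "t \<le> qA" for z t
  proof (rule revenue_slope_mono)
    have t: "0 < t" using that by simp
    show "V (t * x l) \<le> 1/2" if "l \<in> A" for l
      using V_weight_mono[OF t _ that, of qA] qA(3)[OF that] \<open>t \<le> qA\<close> by simp
    show "share x A t \<le> 1" using share_mono[OF t \<open>t \<le> qA\<close>] qA by simp
  qed (use that in auto)
  have slope_sign: "0 < revenue_slope x A t / (t * share x A t) \<longleftrightarrow> 0 < revenue_slope x A t"
    if "0 < t" for t
    using mult_pos_pos[OF that share_pos[OF that]] by (simp add: zero_less_divide_iff)
  show ?thesis
  proof (cases "\<exists>z. qi < z \<and> z < qj \<and> 0 < revenue_slope x A z")
    case True
    then obtain z where z: "qi < z" "z < qj" "0 < revenue_slope x A z" by blast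
    have "revenue_with_entrant x A qj < revenue_with_entrant x A qA"
    proof (rule DERIV_pos_imp_increasing_open[OF order(2)])
      fix t assume t: "qj < t" "t < qA"
      hence t0: "0 < t" using qj by simp
      have "0 < revenue_slope x A t" using slope_mono[of z t] z t qi by fastforce
      thus "\<exists>y. (revenue_with_entrant x A has_real_derivative y) (at t) \<and> 0 < y"
        using revenue_with_entrant_has_real_derivative[OF t0] slope_sign[OF t0] by blast
    qed (rule revenue_with_entrant_continuous_on[OF qj(1)])
    with entry_pays show ?thesis by simp
  next
    case False
    have "- revenue_with_entrant x A qi \<le> - revenue_with_entrant x A qj"
    proof (rule DERIV_nonneg_imp_increasing_open[OF order(1)])
      fix t assume t: "qi < t" "t < qj"
      hence t0: "0 < t" using qi by simp
      have "0 \<le> - (revenue_slope x A t / (t * share x A t))"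
        using False slope_sign[OF t0] t by fastforce
      thus "\<exists>y. ((\<lambda>q. - revenue_with_entrant x A q) has_real_derivative y) (at t) \<and> 0 \<le> y"
        using DERIV_minus[OF revenue_with_entrant_has_real_derivative[OF t0]] by blast
    qed (use revenue_with_entrant_continuous_on[OF qi(1)] in \<open>intro continuous_intros\<close>)
    thus ?thesis by simp
  qed
qed

end

abbreviation weight :: "(nat \<Rightarrow> real) \<Rightarrow> nat \<Rightarrow> real" where
  "weight \<theta> l \<equiv> exp (\<theta> l - 1)"

lemma qbar0_exists:
  assumes "finite T" "T \<noteq> {}"
  shows "\<exists>q. 0 < q \<and> q < 1 \<and> share (weight \<theta>) T q = 1"
proof -
  define E where "E = (\<Sum>i\<in>T. weight \<theta> i)"
  have E: "0 \<le> E" unfolding E_def by (intro sum_nonneg) auto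
  define a where "a = 1 / (2 * (1 + E))"
  have a: "0 < a" "a < 1" using E by (auto simp: a_def field_simps)
  have "(\<Sum>i\<in>T. V (a * weight \<theta> i)) \<le> (\<Sum>i\<in>T. a * weight \<theta> i)"
    using a by (intro sum_mono V_le) auto
  also have "\<dots> = a * E" by (simp add: E_def sum_distrib_left)
  finally have "share (weight \<theta>) T a \<le> a * (1 + E)" unfolding share_def by (simp add: algebra_simps)
  also have "\<dots> = 1/2" using E by (simp add: a_def)
  finally have share_a: "share (weight \<theta>) T a \<le> 1" by simp
  have "0 < (\<Sum>i\<in>T. V (1 * weight \<theta> i))" using assms by (intro sum_pos V_pos) auto
  hence share_1: "1 < share (weight \<theta>) T 1" unfolding share_def by simp
  obtain q where "a \<le> q" "q \<le> 1" "share (weight \<theta>) T q = 1"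
    using IVT'[of "share (weight \<theta>) T" a 1 1] share_a share_1 a
      share_continuous_on[OF assms(1) _ a(1)] by force
  moreover have "q \<noteq> 1" using share_1 calculation by auto
  ultimately show ?thesis using a by (intro exI[of _ q]) auto
qed

lemma
  assumes "finite T" "T \<noteq> {}"
  shows qbar0_pos: "0 < qbar0 \<theta> T" and share_qbar0: "share (weight \<theta>) T (qbar0 \<theta> T) = 1"
proof -
  have "\<exists>!q. 0 < q \<and> q < 1 \<and> share (weight \<theta>) T q = 1"
    using qbar0_exists[OF assms] share_strict_mono[OF assms(1), of "weight \<theta>"]
    by (metis exp_gt_zero less_irrefl linorder_neqE_linordered_idom)
  from theI'[OF this] show "0 < qbar0 \<theta> T" "share (weight \<theta>) T (qbar0 \<theta> T) = 1"
    unfolding qbar0_def share_def by (auto simp: algebra_simps)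
qed

lemma re_bar_eq_revenue_with_entrant:
  assumes "finite T" "T \<noteq> {}"
  shows "re_bar \<theta> T = revenue_with_entrant (weight \<theta>) T (qbar0 \<theta> T)"
  unfolding re_bar_def revenue_with_entrant_def share_qbar0[OF assms] qbar_def odds_def by simp

lemma
  assumes "finite A" "j \<notin> A"
  shows V_entrant_eq: "V (qbar0 \<theta> (insert j A) * weight \<theta> j)
           = 1 - share (weight \<theta>) A (qbar0 \<theta> (insert j A))"
    and re_bar_insert_eq: "re_bar \<theta> (insert j A)
           = revenue_with_entrant (weight \<theta>) A (qbar0 \<theta> (insert j A))"
proof -
  let ?q = "qbar0 \<theta> (insert j A)"
  have "share (weight \<theta>) (insert j A) ?q = 1" using share_qbar0 assms(1) by blast
  thus V_j: "V (?q * weight \<theta> j) = 1 - share (weight \<theta>) A ?q"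
    using assms unfolding share_def by simp
  have "0 < ?q" using qbar0_pos assms(1) by blast
  hence "0 < share (weight \<theta>) A ?q" using share_pos[OF assms(1)] by simp
  hence "odds (V (?q * weight \<theta> j)) = 1 / share (weight \<theta>) A ?q - 1"
    unfolding V_j odds_def by (simp add: field_simps)
  thus "re_bar \<theta> (insert j A) = revenue_with_entrant (weight \<theta>) A ?q"
    using assms unfolding re_bar_def revenue_with_entrant_def qbar_def odds_def by simp
qed

lemma re_bar_exchange:
  assumes A: "finite A" "A \<noteq> {}" and ij: "i \<notin> A" "j \<notin> A" and \<theta>: "\<theta> j \<le> \<theta> i"
    and half: "\<And>l. l \<in> A \<Longrightarrow> qbar \<theta> A l < 1/2"
    and entry_pays: "re_bar \<theta> A \<le> re_bar \<theta> (insert j A)"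
  shows "re_bar \<theta> (insert j A) \<le> re_bar \<theta> (insert i A)"
proof -
  have "revenue_with_entrant (weight \<theta>) A (qbar0 \<theta> (insert j A))
      \<le> revenue_with_entrant (weight \<theta>) A (qbar0 \<theta> (insert i A))"
  proof (rule revenue_with_stronger_entrant_ge[OF A(1),
        where ci = "weight \<theta> i" and cj = "weight \<theta> j"])
    show "0 < qbar0 \<theta> A" "share (weight \<theta>) A (qbar0 \<theta> A) = 1"
      using qbar0_pos[OF A] share_qbar0[OF A] .
    show "V (qbar0 \<theta> A * weight \<theta> l) \<le> 1/2" if "l \<in> A" for l
      using half[OF that] unfolding qbar_def by simp
    show "0 < qbar0 \<theta> (insert i A)" "0 < qbar0 \<theta> (insert j A)"
      using qbar0_pos A(1) by blast+
    show "revenue_with_entrant (weight \<theta>) A (qbar0 \<theta> A)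
        \<le> revenue_with_entrant (weight \<theta>) A (qbar0 \<theta> (insert j A))"
      using entry_pays re_bar_eq_revenue_with_entrant[OF A] re_bar_insert_eq[OF A(1) ij(2)]
      by simp
  qed (use \<theta> V_entrant_eq[OF A(1) ij(1)] V_entrant_eq[OF A(1) ij(2)] in simp_all)
  thus ?thesis using re_bar_insert_eq[OF A(1)] ij by simp
qed

definition revenue_optimal :: "(nat \<Rightarrow> real) \<Rightarrow> nat \<Rightarrow> nat set \<Rightarrow> bool" where
  "revenue_optimal \<theta> n S \<longleftrightarrow> S \<subseteq> {1..n} \<and> S \<noteq> {} \<and>
     (\<forall>T. T \<subseteq> {1..n} \<and> T \<noteq> {} \<longrightarrow> re_bar \<theta> T \<le> re_bar \<theta> S)"

context
  fixes \<theta> :: "nat \<Rightarrow> real" and n :: nat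
  assumes mono: "\<And>i j. 1 \<le> i \<Longrightarrow> i \<le> j \<Longrightarrow> j \<le> n \<Longrightarrow> \<theta> j \<le> \<theta> i"
    and half: "\<And>T i. T \<subseteq> {1..n} \<Longrightarrow> T \<noteq> {} \<Longrightarrow> i \<in> T \<Longrightarrow> qbar \<theta> T i < 1/2"
begin

lemma revenue_optimal_exchange:
  assumes opt: "revenue_optimal \<theta> n S" and card: "2 \<le> card S"
    and ij: "j \<in> S" "i \<notin> S" "1 \<le> i" "i \<le> j"
  shows "revenue_optimal \<theta> n (insert i (S - {j}))"
proof -
  define A where "A = S - {j}"
  have S: "S \<subseteq> {1..n}" "S = insert j A" using opt ij unfolding revenue_optimal_def A_def by auto
  have A: "finite A" "A \<subseteq> {1..n}" "j \<notin> A" "i \<notin> A"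
    using S ij finite_subset[OF S(1)] unfolding A_def by auto
  have "card A = card S - 1" unfolding A_def using ij A(1) by simp
  hence "A \<noteq> {}" using card by auto
  have "re_bar \<theta> S \<le> re_bar \<theta> (insert i A)"
  proof -
    have "\<theta> j \<le> \<theta> i" using mono ij S(1) by auto
    moreover have "re_bar \<theta> A \<le> re_bar \<theta> S"
      using opt A \<open>A \<noteq> {}\<close> unfolding revenue_optimal_def by blast
    ultimately show ?thesis
      using re_bar_exchange[OF A(1) \<open>A \<noteq> {}\<close> A(4,3)] half[OF A(2) \<open>A \<noteq> {}\<close>] S(2) by simp
  qed
  moreover have "insert i A \<subseteq> {1..n}" using A ij S by auto
  ultimately show ?thesis
    using opt unfolding revenue_optimal_def A_def by (blast intro: order_trans)
qed

lemma revenue_optimal_prefix: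
  assumes "revenue_optimal \<theta> n S" "2 \<le> card S"
  shows "revenue_optimal \<theta> n {1..card S}"
  using assms
proof (induction "card (S - {1..card S})" arbitrary: S rule: less_induct)
  case less
  have S: "finite S" "S \<subseteq> {1..n}" using less.prems finite_subset unfolding revenue_optimal_def by auto
  show ?case
  proof (cases "S \<subseteq> {1..card S}")
    case True
    hence "S = {1..card S}" using card_subset_eq[of "{1..card S}" S] by simp
    with less.prems show ?thesis by simp
  next
    case False
    then obtain j where j: "j \<in> S" "card S < j" using S(2) by fastforce
    have "\<not> {1..card S} \<subseteq> S"
    proof
      assume "{1..card S} \<subseteq> S"
      hence "insert j {1..card S} \<subseteq> S" using j by blast
      hence "card (insert j {1..card S}) \<le> card S" by (rule card_mono[OF S(1)])
      thus False using j by simp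
    qed
    then obtain i where i: "1 \<le> i" "i \<le> card S" "i \<notin> S" by (meson atLeastAtMost_iff subsetI)
    define S' where "S' = insert i (S - {j})"
    have opt': "revenue_optimal \<theta> n S'"
      unfolding S'_def using revenue_optimal_exchange[OF less.prems j(1) i(3,1)] i j by simp
    have card': "card S' = card S" unfolding S'_def using S(1) i j by (simp add: card_insert_if)
    have "S' - {1..card S'} = (S - {1..card S}) - {j}" unfolding card' unfolding S'_def using i j by auto
    hence "card (S' - {1..card S'}) < card (S - {1..card S})"
      using card_Diff1_less[of "S - {1..card S}" j] S(1) j by simp
    from less.hyps[OF this opt'] less.prems card' show ?thesis by simp
  qed
qed

end

theorem lemma6:
  fixes n :: nat and \<theta> :: "nat \<Rightarrow> real" and S :: "nat set"
  assumes mono: "\<And>i j. 1 \<le> i \<Longrightarrow> i \<le> j \<Longrightarrow> j \<le> n \<Longrightarrow> \<theta> j \<le> \<theta> i"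
    and nonneg: "\<And>i. 1 \<le> i \<Longrightarrow> i \<le> n \<Longrightarrow> 0 \<le> \<theta> i"
    and half: "\<And>T i. T \<subseteq> {1..n} \<Longrightarrow> T \<noteq> {} \<Longrightarrow> i \<in> T \<Longrightarrow> qbar \<theta> T i < 1/2"
    and S_sub: "S \<subseteq> {1..n}" and S_ne: "S \<noteq> {}"
    and S_opt: "\<And>T. T \<subseteq> {1..n} \<Longrightarrow> T \<noteq> {} \<Longrightarrow> re_bar \<theta> T \<le> re_bar \<theta> S"
    and k2: "card S \<ge> 2"
  shows "\<forall>T. T \<subseteq> {1..n} \<and> T \<noteq> {} \<longrightarrow> re_bar \<theta> T \<le> re_bar \<theta> {1..card S}"
proof -
  have "revenue_optimal \<theta> n S"
    unfolding revenue_optimal_def using S_sub S_ne S_opt by blast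
  from revenue_optimal_prefix[OF mono half this k2]
  show ?thesis unfolding revenue_optimal_def by blast
qed

end
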